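(* Let $n_1,\dots,n_t\ge 0$ be integers and let $G=K_{n_1\times 1,\,n_2\times 2,\,\dots,\,n_t\times t}$ be the complete $(n_1+\dots+n_t)$-partite graph having exactly $n_i$ parts of size $i$ for each $1\le i\le t$. Then $\binom{IDI(G)}{i}\ge n_i$ for every $1\le i\le t$.
   Context: For a finite simple connected graph $G=(V,E)$ with diameter $d$, a rank assignment is a function $f:V\to\mathbb{R}$; under $f$, the string of a vertex $v$ is the $d$-vector whose $i$-th coordinate is the sum of $f(w)$ over all vertices $w$ with $d(v,w)=i$. The ID-index $IDI(G)$ is the minimum $k$ such that there exists $f:V\to\mathbb{R}$ with $|f(V)|=k$ under which all vertices have distinct strings. *)

theory Defs
  imports Complex_Main
begin

definition is_walk :: "'a set \<Rightarrow> ('a \<Rightarrow> 'a \<Rightarrow> bool) \<Rightarrow> 'a list \<Rightarrow> bool" where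
  "is_walk V E xs \<longleftrightarrow> xs \<noteq> [] \<and> set xs \<subseteq> V \<and>
     (\<forall>i. Suc i < length xs \<longrightarrow> E (xs ! i) (xs ! Suc i))"

definition graph_connected :: "'a set \<Rightarrow> ('a \<Rightarrow> 'a \<Rightarrow> bool) \<Rightarrow> bool" where
  "graph_connected V E \<longleftrightarrow> V \<noteq> {} \<and>
     (\<forall>v\<in>V. \<forall>w\<in>V. \<exists>xs. is_walk V E xs \<and> hd xs = v \<and> last xs = w)"

definition gdist :: "'a set \<Rightarrow> ('a \<Rightarrow> 'a \<Rightarrow> bool) \<Rightarrow> 'a \<Rightarrow> 'a \<Rightarrow> nat" where
  "gdist V E v w = (LEAST k. \<exists>xs. is_walk V E xs \<and> hd xs = v \<and> last xs = w \<and> length xs = Suc k)"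

definition diameter :: "'a set \<Rightarrow> ('a \<Rightarrow> 'a \<Rightarrow> bool) \<Rightarrow> nat" where
  "diameter V E = Max {gdist V E v w | v w. v \<in> V \<and> w \<in> V}"

definition vstring :: "'a set \<Rightarrow> ('a \<Rightarrow> 'a \<Rightarrow> bool) \<Rightarrow> ('a \<Rightarrow> real) \<Rightarrow> 'a \<Rightarrow> real list" where
  "vstring V E f v = map (\<lambda>i. \<Sum>w\<in>{w\<in>V. gdist V E v w = i}. f w) [1..<Suc (diameter V E)]"

definition IDI :: "'a set \<Rightarrow> ('a \<Rightarrow> 'a \<Rightarrow> bool) \<Rightarrow> nat" where
  "IDI V E = (LEAST k. \<exists>f :: 'a \<Rightarrow> real. card (f ` V) = k \<and> inj_on (vstring V E f) V)"

text \<open>The complete multipartite graph K_{n_1 x 1, ..., n_t x t}: vertex (i,j,k) is the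
k-th vertex (k < i) of the j-th part (j < n i) among the parts of size i (1 \<le> i \<le> t);
two vertices are adjacent iff they lie in different parts.\<close>
definition cmp_verts :: "nat \<Rightarrow> (nat \<Rightarrow> nat) \<Rightarrow> (nat \<times> nat \<times> nat) set" where
  "cmp_verts t n = {(i, j, k). 1 \<le> i \<and> i \<le> t \<and> j < n i \<and> k < i}"

definition cmp_adj :: "nat \<times> nat \<times> nat \<Rightarrow> nat \<times> nat \<times> nat \<Rightarrow> bool" where
  "cmp_adj u v \<longleftrightarrow> (fst u, fst (snd u)) \<noteq> (fst v, fst (snd v))"

end

theory Submission
  imports Defs
begin

(* In a connected complete multipartite graph two distinct vertices are at distance 1 if they lie
   in different parts and at distance 2 if they share a part. The string of v therefore records
   only sum f V - sum f (P v) and sum f (P v) - f v, where P v is the part of v: two vertices have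
   the same string iff they have the same rank and their parts have the same rank sum. For a
   resolving rank assignment f this makes f injective on every part, and it makes the rank sets
   f(P) of distinct parts distinct, since equal rank sets give equal rank sums and then two
   vertices of equal rank in the two parts would share a string. So the n_i parts of size i give
   n_i distinct i-element subsets of f(V). *)

lemma is_walk_singleton [simp]: "is_walk V E [v] \<longleftrightarrow> v \<in> V"
  by (simp add: is_walk_def)

lemma is_walk_pair [simp]: "is_walk V E [v, w] \<longleftrightarrow> v \<in> V \<and> w \<in> V \<and> E v w"
  by (auto simp add: is_walk_def less_Suc_eq)

lemma is_walk_triple [simp]:
  "is_walk V E [u, v, w] \<longleftrightarrow> u \<in> V \<and> v \<in> V \<and> w \<in> V \<and> E u v \<and> E v w"
  by (auto simp add: is_walk_def less_Suc_eq)

lemma walk_start_has_neighbour: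
  assumes "is_walk V E xs" "hd xs \<noteq> last xs"
  obtains m where "m \<in> V" "E (hd xs) m"
proof (cases xs rule: remdups_adj.cases)
  case (3 x y ys)
  then have "y \<in> V" "E x y"
    using assms(1) unfolding is_walk_def by (auto dest: spec[of _ 0])
  then show ?thesis
    using that 3 by simp
qed (use assms in \<open>auto simp: is_walk_def\<close>)

lemma gdist_le_walk_length:
  assumes "is_walk V E xs"
  shows "gdist V E (hd xs) (last xs) \<le> length xs - 1"
proof -
  have "length xs = Suc (length xs - 1)"
    using assms by (simp add: is_walk_def)
  then show ?thesis
    unfolding gdist_def using assms by (intro Least_le) blast
qed

lemma shortest_walk:
  assumes "is_walk V E xs" "hd xs = v" "last xs = w"
  obtains ys where "is_walk V E ys" "hd ys = v" "last ys = w" "length ys = Suc (gdist V E v w)"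
proof -
  have "length xs = Suc (length xs - 1)"
    using assms by (simp add: is_walk_def)
  then have "\<exists>k ys. is_walk V E ys \<and> hd ys = v \<and> last ys = w \<and> length ys = Suc k"
    using assms by blast
  then have "\<exists>ys. is_walk V E ys \<and> hd ys = v \<and> last ys = w \<and> length ys = Suc (gdist V E v w)"
    unfolding gdist_def by (rule LeastI_ex)
  then show ?thesis
    using that by blast
qed

lemma gdist_le_1: "v \<in> V \<Longrightarrow> w \<in> V \<Longrightarrow> E v w \<Longrightarrow> gdist V E v w \<le> 1"
  using gdist_le_walk_length[of V E "[v, w]"] by simp

lemma gdist_le_2:
  "u \<in> V \<Longrightarrow> v \<in> V \<Longrightarrow> w \<in> V \<Longrightarrow> E u v \<Longrightarrow> E v w \<Longrightarrow> gdist V E u w \<le> 2"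
  using gdist_le_walk_length[of V E "[u, v, w]"] by simp

lemma gdist_self: "v \<in> V \<Longrightarrow> gdist V E v v = 0"
  using gdist_le_walk_length[of V E "[v]"] by simp

lemma graph_connected_walk:
  assumes "graph_connected V E" "v \<in> V" "w \<in> V"
  obtains xs where "is_walk V E xs" "hd xs = v" "last xs = w"
  using assms unfolding graph_connected_def by blast

lemma gdist_eq_0_iff:
  assumes "graph_connected V E" "v \<in> V" "w \<in> V"
  shows "gdist V E v w = 0 \<longleftrightarrow> v = w"
proof
  assume "gdist V E v w = 0"
  obtain xs where "is_walk V E xs" "hd xs = v" "last xs = w"
    using assms by (rule graph_connected_walk)
  then obtain ys where "hd ys = v" "last ys = w" "length ys = Suc (gdist V E v w)"
    by (rule shortest_walk)
  then show "v = w"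
    using \<open>gdist V E v w = 0\<close> by (cases ys) auto
next
  assume "v = w"
  then show "gdist V E v w = 0"
    using assms(2) by (simp add: gdist_self)
qed

lemma gdist_eq_1_iff:
  assumes "graph_connected V E" "v \<in> V" "w \<in> V"
  shows "gdist V E v w = 1 \<longleftrightarrow> v \<noteq> w \<and> E v w"
proof
  assume dist: "gdist V E v w = 1"
  obtain xs where "is_walk V E xs" "hd xs = v" "last xs = w"
    using assms by (rule graph_connected_walk)
  then obtain ys where ys: "is_walk V E ys" "hd ys = v" "last ys = w"
    "length ys = Suc (gdist V E v w)"
    by (rule shortest_walk)
  then have "ys = [v, w]"
    using dist by (cases ys rule: remdups_adj.cases) auto
  then show "v \<noteq> w \<and> E v w"
    using ys(1) dist gdist_self[of v V E] by auto
next
  assume "v \<noteq> w \<and> E v w"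
  then show "gdist V E v w = 1"
    using gdist_le_1[of v V w E] gdist_eq_0_iff[OF assms] assms by simp
qed

lemma gdist_le_diameter:
  assumes "finite V" "v \<in> V" "w \<in> V"
  shows "gdist V E v w \<le> diameter V E"
  unfolding diameter_def using assms by (intro Max_ge finite_image_set2) auto

lemma nth_vstring:
  "j < diameter V E \<Longrightarrow> vstring V E f v ! j = (\<Sum>w\<in>{w\<in>V. gdist V E v w = Suc j}. f w)"
  by (simp add: vstring_def del: upt_Suc)

lemma IDI_attained:
  assumes "inj_on (vstring V E f) V"
  obtains g where "card (g ` V) = IDI V E" "inj_on (vstring V E g) V"
proof -
  have "\<exists>k g. card (g ` V) = k \<and> inj_on (vstring V E g) V"
    using assms by blast
  then have "\<exists>g. card (g ` V) = IDI V E \<and> inj_on (vstring V E g) V"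
    unfolding IDI_def by (rule LeastI_ex)
  then show ?thesis
    using that by blast
qed

locale vertex_partition =
  fixes V :: "'a set" and p :: "'a \<Rightarrow> 'b"
begin

definition part :: "'a \<Rightarrow> 'a set" where
  "part v = {w \<in> V. p w = p v}"

lemma mem_part_iff [simp]: "w \<in> part v \<longleftrightarrow> w \<in> V \<and> p w = p v"
  by (simp add: part_def)

lemma part_subset: "part v \<subseteq> V"
  by (auto simp: part_def)

lemma part_eq_part: "w \<in> part v \<Longrightarrow> part w = part v"
  by (auto simp: part_def)

end

locale complete_multipartite = vertex_partition V p
  for V :: "'a set" and p :: "'a \<Rightarrow> 'b" +
  fixes E :: "'a \<Rightarrow> 'a \<Rightarrow> bool"
  assumes finite_V: "finite V"
    and connected: "graph_connected V E"
    and adj_iff: "u \<in> V \<Longrightarrow> w \<in> V \<Longrightarrow> E u w \<longleftrightarrow> p u \<noteq> p w"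
begin

lemma finite_part [simp]: "finite (part v)"
  using finite_V by (simp add: part_def)

lemma gdist_eq:
  assumes "v \<in> V" "w \<in> V"
  shows "gdist V E v w = (if w = v then 0 else if p w = p v then 2 else 1)"
proof -
  consider "w = v" | "p w \<noteq> p v" | "w \<noteq> v" "p w = p v"
    by blast
  then show ?thesis
  proof cases
    case 1
    then show ?thesis
      using assms by (simp add: gdist_self)
  next
    case 2
    then show ?thesis
      using assms adj_iff gdist_eq_1_iff[OF connected] by auto
  next
    case 3
    obtain xs where xs: "is_walk V E xs" "hd xs = v" "last xs = w"
      using connected assms by (rule graph_connected_walk)
    obtain m where "m \<in> V" "E v m"
      using walk_start_has_neighbour[OF xs(1)] xs 3 by auto
    \<comment> \<open>m lies outside the common part of v and w, so it is a neighbour of w as well\<close>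
    then have "gdist V E v w \<le> 2"
      using 3 assms adj_iff by (intro gdist_le_2[of _ _ m]) auto
    moreover have "gdist V E v w \<noteq> 0" "gdist V E v w \<noteq> 1"
      using 3 assms adj_iff gdist_eq_0_iff[OF connected] gdist_eq_1_iff[OF connected] by auto
    ultimately show ?thesis
      using 3 by simp
  qed
qed

lemma gdist_level_eq:
  assumes "v \<in> V"
  shows "{w \<in> V. gdist V E v w = j} =
    (if j = 0 then {v} else if j = 1 then V - part v else if j = 2 then part v - {v} else {})"
  using assms by (auto simp: gdist_eq split: if_splits)

lemma sum_gdist_level:
  fixes f :: "'a \<Rightarrow> 'c::ab_group_add"
  assumes "v \<in> V"
  shows "(\<Sum>w\<in>{w \<in> V. gdist V E v w = j}. f w) =
    (if j = 0 then f v else if j = 1 then sum f V - sum f (part v)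
     else if j = 2 then sum f (part v) - f v else 0)"
  using assms by (simp add: gdist_level_eq sum_diff[OF finite_V part_subset] sum_diff1)

lemma part_eq_singleton:
  assumes "diameter V E < 2" "v \<in> V"
  shows "part v = {v}"
proof -
  have "w = v" if "w \<in> part v" for w
    using that assms gdist_le_diameter[OF finite_V assms(2), of w E]
    by (auto simp: gdist_eq split: if_splits)
  then show ?thesis
    using assms(2) by auto
qed

lemma vstring_eq_iff:
  assumes "v \<in> V" "w \<in> V"
  shows "vstring V E f v = vstring V E f w \<longleftrightarrow> f v = f w \<and> sum f (part v) = sum f (part w)"
proof
  assume eq: "vstring V E f v = vstring V E f w"
  show "f v = f w \<and> sum f (part v) = sum f (part w)"
  proof (cases "v = w")
    case False
    then have "1 \<le> diameter V E"
      using gdist_le_diameter[OF finite_V assms, of E] assms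
      by (simp add: gdist_eq split: if_splits)
    then have parts: "sum f (part v) = sum f (part w)"
      using arg_cong[OF eq, of "\<lambda>s. s ! 0"] assms by (simp add: nth_vstring sum_gdist_level)
    show ?thesis
    proof (cases "2 \<le> diameter V E")
      case True
      then show ?thesis
        using arg_cong[OF eq, of "\<lambda>s. s ! 1"] parts assms
        by (simp add: nth_vstring sum_gdist_level)
    next
      case False
      then show ?thesis
        using parts assms by (simp add: part_eq_singleton)
    qed
  qed simp
next
  assume "f v = f w \<and> sum f (part v) = sum f (part w)"
  then show "vstring V E f v = vstring V E f w"
    using assms by (simp add: vstring_def sum_gdist_level)
qed

lemma inj_vstring_if_inj:
  assumes "inj_on f V"
  shows "inj_on (vstring V E f) V"
  using assms by (auto simp: inj_on_def vstring_eq_iff)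

lemma exists_resolving_assignment:
  obtains f :: "'a \<Rightarrow> real" where "inj_on (vstring V E f) V"
proof -
  obtain g :: "'a \<Rightarrow> nat" where "inj_on g V"
    using finite_imp_inj_to_nat_seg[OF finite_V] by blast
  then have "inj_on (real \<circ> g) V"
    by (simp add: inj_on_def)
  then show ?thesis
    using that inj_vstring_if_inj by blast
qed

context
  fixes f :: "'a \<Rightarrow> real"
  assumes resolving: "inj_on (vstring V E f) V"
begin

lemma inj_on_part:
  assumes "v \<in> V"
  shows "inj_on f (part v)"
proof
  fix u w
  assume u: "u \<in> part v" and w: "w \<in> part v" and "f u = f w"
  moreover have "u \<in> V" "w \<in> V"
    using u w by simp_all
  moreover have "part u = part w"
    using part_eq_part[OF u] part_eq_part[OF w] by simp
  ultimately have "vstring V E f u = vstring V E f w"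
    by (simp add: vstring_eq_iff)
  then show "u = w"
    using resolving \<open>u \<in> V\<close> \<open>w \<in> V\<close> by (simp add: inj_on_eq_iff)
qed

lemma inj_on_image_part: "inj_on (\<lambda>P. f ` P) (part ` V)"
proof
  fix P Q
  assume "P \<in> part ` V" "Q \<in> part ` V" and eq: "f ` P = f ` Q"
  then obtain u v where u: "u \<in> V" "P = part u" and v: "v \<in> V" "Q = part v"
    by blast
  then have "f u \<in> f ` part v"
    using eq by auto
  then obtain w where w: "f u = f w" "w \<in> part v"
    by (rule imageE)
  have same_part: "part w = part v"
    using w(2) by (rule part_eq_part)
  have "sum f (part u) = sum id (f ` part u)"
    by (simp add: sum.reindex[OF inj_on_part[OF u(1)]])
  also have "\<dots> = sum id (f ` part v)"
    using eq u(2) v(2) by simp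
  also have "\<dots> = sum f (part w)"
    by (simp add: sum.reindex[OF inj_on_part[OF v(1)]] same_part)
  finally have "vstring V E f u = vstring V E f w"
    using u(1) w by (simp add: vstring_eq_iff)
  then have "u = w"
    using resolving u(1) w(2) part_subset by (auto simp: inj_on_eq_iff)
  then show "P = Q"
    using u(2) v(2) same_part by simp
qed

lemma card_parts_of_size_le_choose:
  "card {P \<in> part ` V. card P = i} \<le> card (f ` V) choose i"
proof -
  have "(\<lambda>P. f ` P) ` {P \<in> part ` V. card P = i} \<subseteq> {B. B \<subseteq> f ` V \<and> card B = i}"
    using part_subset by (auto simp: card_image inj_on_part)
  then have "card {P \<in> part ` V. card P = i} \<le> card {B. B \<subseteq> f ` V \<and> card B = i}"
    using finite_V inj_on_image_part by (intro card_inj_on_le) (auto intro: inj_on_subset)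
  then show ?thesis
    using finite_V by (simp add: n_subsets)
qed

end

end

definition cmp_part :: "nat \<times> nat \<times> nat \<Rightarrow> nat \<times> nat" where
  "cmp_part u = (fst u, fst (snd u))"

lemma cmp_adj_iff: "cmp_adj u w \<longleftrightarrow> cmp_part u \<noteq> cmp_part w"
  by (simp add: cmp_adj_def cmp_part_def)

lemma cmp_verts_eq_Sigma: "cmp_verts t n = (SIGMA i:{1..t}. {..<n i} \<times> {..<i})"
  by (auto simp: cmp_verts_def)

lemma complete_multipartite_cmp:
  assumes "graph_connected (cmp_verts t n) cmp_adj"
  shows "complete_multipartite (cmp_verts t n) cmp_part cmp_adj"
  using assms by unfold_locales (simp_all add: cmp_verts_eq_Sigma cmp_adj_iff)

lemma cmp_part_eq:
  assumes "(i, j, k) \<in> cmp_verts t n"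
  shows "vertex_partition.part (cmp_verts t n) cmp_part (i, j, k) = (\<lambda>k. (i, j, k)) ` {..<i}"
  using assms by (auto simp: vertex_partition.part_def cmp_verts_def cmp_part_def)

lemma card_cmp_block [simp]: "card ((\<lambda>k. (i, j, k)) ` {..<i}) = i"
  by (simp add: card_image inj_on_def)

lemma card_cmp_parts_of_size:
  assumes "i \<in> {1..t}"
  shows "card {P \<in> vertex_partition.part (cmp_verts t n) cmp_part ` cmp_verts t n. card P = i} = n i"
proof -
  let ?part = "vertex_partition.part (cmp_verts t n) cmp_part"
  let ?block = "\<lambda>j. (\<lambda>k. (i, j, k)) ` {..<i}"
  have "{P \<in> ?part ` cmp_verts t n. card P = i} = ?block ` {..<n i}"
  proof
    show "{P \<in> ?part ` cmp_verts t n. card P = i} \<subseteq> ?block ` {..<n i}"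
    proof
      fix P
      assume "P \<in> {P \<in> ?part ` cmp_verts t n. card P = i}"
      then obtain i' j k where v: "(i', j, k) \<in> cmp_verts t n"
        and P: "P = ?part (i', j, k)" and "card P = i"
        by auto
      then have "i' = i"
        by (simp add: cmp_part_eq)
      moreover have "j < n i'"
        using v by (simp add: cmp_verts_def)
      ultimately show "P \<in> ?block ` {..<n i}"
        using v P by (simp add: cmp_part_eq)
    qed
  next
    have "(i, j, 0) \<in> cmp_verts t n" if "j < n i" for j
      using assms that by (simp add: cmp_verts_def)
    then show "?block ` {..<n i} \<subseteq> {P \<in> ?part ` cmp_verts t n. card P = i}"
      by (force simp: cmp_part_eq)
  qed
  moreover have "inj_on ?block {..<n i}"
  proof
    fix j j'
    assume "?block j = ?block j'"
    moreover have "(i, j, 0) \<in> ?block j"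
      using assms by auto
    ultimately show "j = j'"
      by auto
  qed
  ultimately show ?thesis
    by (simp add: card_image)
qed

theorem mainTheorem14:
  fixes t :: nat and n :: "nat \<Rightarrow> nat"
  assumes "graph_connected (cmp_verts t n) cmp_adj"
  shows "\<forall>i\<in>{1..t}. n i \<le> IDI (cmp_verts t n) cmp_adj choose i"
proof
  fix i
  assume i: "i \<in> {1..t}"
  interpret complete_multipartite "cmp_verts t n" cmp_part cmp_adj
    using assms by (rule complete_multipartite_cmp)
  obtain f0 :: "nat \<times> nat \<times> nat \<Rightarrow> real"
    where "inj_on (vstring (cmp_verts t n) cmp_adj f0) (cmp_verts t n)"
    by (rule exists_resolving_assignment)
  then obtain f where f: "card (f ` cmp_verts t n) = IDI (cmp_verts t n) cmp_adj"
    "inj_on (vstring (cmp_verts t n) cmp_adj f) (cmp_verts t n)"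
    by (rule IDI_attained)
  have "n i = card {P \<in> part ` cmp_verts t n. card P = i}"
    using i by (simp add: card_cmp_parts_of_size)
  also have "\<dots> \<le> card (f ` cmp_verts t n) choose i"
    using f(2) by (rule card_parts_of_size_le_choose)
  finally show "n i \<le> IDI (cmp_verts t n) cmp_adj choose i"
    using f(1) by simp
qed

end
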